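(* Let $G$ be a graph and $\mathcal H,\mathcal K$ families of subgraphs of $G$, each member inducing a connected subgraph of $G$. If $G$ has a tree decomposition that is $\mathcal K$-easy and $k$-sparse with respect to $\mathcal H$, then $(G,\mathcal H,\mathcal K)$ admits an intersection support of treewidth at most $k$.
   Context: A subgraph $H$ of $G$ is identified with its vertex set $V(H)$. For $K\in\mathcal K$, $\mathcal H_K=\{H\in\mathcal H: V(H)\cap V(K)\ne\emptyset\}$. An intersection support for $(G,\mathcal H,\mathcal K)$ is a graph $\tilde Q$ with vertex set $\mathcal H$ such that $\tilde Q[\mathcal H_K]$ is connected for every $K\in\mathcal K$. For a tree decomposition $(T,\{B_z\})$ of $G$ and an edge $\{x,y\}\in E(T)$, the adhesion set is $A_{xy}=B_x\cap B_y$. The tree decomposition is $\mathcal K$-easy if for every $K\in\mathcal K$ and every adhesion set $A$ with $A\cap V(K)\ne\emptyset$ there is $H\in\mathcal H_K$ with $V(H)\cap V(K)\cap A\ne\emptyset$. It is $k$-sparse with respect to $\mathcal H$ if every bag intersects at most $k$ members of $\mathcal H$. *)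

theory Defs
  imports Main
begin

text \<open>A (simple, undirected) graph is a vertex set V with a set E of
  2-element edges contained in V.  Subgraphs are identified with vertex sets.\<close>
definition graph :: "'a set \<Rightarrow> 'a set set \<Rightarrow> bool" where
  "graph V E \<longleftrightarrow> (\<forall>e\<in>E. e \<subseteq> V \<and> card e = 2)"

text \<open>The subgraph induced (by edge set E) on the vertex set S is connected:
  any two vertices of S are joined by a path inside S (the empty set counts as connected).\<close>
definition induced_connected :: "'a set set \<Rightarrow> 'a set \<Rightarrow> bool" where
  "induced_connected E S \<longleftrightarrow>
     (\<forall>x\<in>S. \<forall>y\<in>S. (x, y) \<in> ({(u, v). u \<in> S \<and> v \<in> S \<and> {u, v} \<in> E})\<^sup>*)"

text \<open>A (finite) tree: nonempty, connected, and every edge is a bridge (minimally connected).\<close>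
definition is_tree :: "'b set \<Rightarrow> 'b set set \<Rightarrow> bool" where
  "is_tree T ET \<longleftrightarrow> graph T ET \<and> finite T \<and> T \<noteq> {} \<and> induced_connected ET T \<and>
     (\<forall>e\<in>ET. \<not> induced_connected (ET - {e}) T)"

definition tree_decomposition ::
  "'a set \<Rightarrow> 'a set set \<Rightarrow> 'b set \<Rightarrow> 'b set set \<Rightarrow> ('b \<Rightarrow> 'a set) \<Rightarrow> bool" where
  "tree_decomposition V E T ET B \<longleftrightarrow>
     is_tree T ET \<and>
     (\<forall>z\<in>T. B z \<subseteq> V) \<and>
     (\<forall>v\<in>V. \<exists>z\<in>T. v \<in> B z) \<and>
     (\<forall>e\<in>E. \<exists>z\<in>T. e \<subseteq> B z) \<and>
     (\<forall>v\<in>V. induced_connected ET {z\<in>T. v \<in> B z})"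

text \<open>Treewidth at most k: some tree decomposition with all bags of size at most k+1.
  (Index type nat suffices for finite graphs.)\<close>
definition treewidth_le :: "'a set \<Rightarrow> 'a set set \<Rightarrow> nat \<Rightarrow> bool" where
  "treewidth_le V E k \<longleftrightarrow>
     (\<exists>(T :: nat set) ET B. tree_decomposition V E T ET B \<and> (\<forall>z\<in>T. card (B z) \<le> k + 1))"

definition meeting :: "'a set set \<Rightarrow> 'a set \<Rightarrow> 'a set set" where
  "meeting Hs K = {H\<in>Hs. H \<inter> K \<noteq> {}}"

definition intersection_support :: "'a set set \<Rightarrow> 'a set set \<Rightarrow> 'a set set set \<Rightarrow> bool" where
  "intersection_support Hs Ks Q \<longleftrightarrow>
     graph Hs Q \<and> (\<forall>K\<in>Ks. induced_connected Q (meeting Hs K))"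

definition K_easy ::
  "'a set set \<Rightarrow> 'a set set \<Rightarrow> 'b set set \<Rightarrow> ('b \<Rightarrow> 'a set) \<Rightarrow> bool" where
  "K_easy Hs Ks ET B \<longleftrightarrow>
     (\<forall>K\<in>Ks. \<forall>x y. {x, y} \<in> ET \<longrightarrow> (B x \<inter> B y) \<inter> K \<noteq> {} \<longrightarrow>
        (\<exists>H\<in>meeting Hs K. H \<inter> K \<inter> (B x \<inter> B y) \<noteq> {}))"

definition sparse :: "nat \<Rightarrow> 'a set set \<Rightarrow> 'b set \<Rightarrow> ('b \<Rightarrow> 'a set) \<Rightarrow> bool" where
  "sparse k Hs T B \<longleftrightarrow> (\<forall>z\<in>T. card {H\<in>Hs. H \<inter> B z \<noteq> {}} \<le> k)"

end

theory Submission
  imports Defs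
begin

text \<open>Let Q join two members of \<H> whenever they meet a common bag, and give each tree node
  the members of \<H> meeting its bag. For connected H, any two bags meeting H are joined in the
  tree by a path whose adhesion sets all meet H; hence the bags meeting H form a subtree, and
  this is a tree decomposition of Q whose bags have at most k elements by sparseness (plus
  possibly the empty subgraph, which meets no bag). For K \<in> \<K>, the same path argument applied
  to K, together with \<K>-easiness at every adhesion set on the path, connects any two members
  of \<H>_K inside Q[\<H>_K].\<close>

abbreviation induced_edges :: "'a set set \<Rightarrow> 'a set \<Rightarrow> ('a \<times> 'a) set" where
  "induced_edges E S \<equiv> {(u, v). u \<in> S \<and> v \<in> S \<and> {u, v} \<in> E}"

definition adhesion_edges ::
  "'b set \<Rightarrow> 'b set set \<Rightarrow> ('b \<Rightarrow> 'a set) \<Rightarrow> 'a set \<Rightarrow> ('b \<times> 'b) set" where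
  "adhesion_edges T ET B S = {(a, b). a \<in> T \<and> b \<in> T \<and> {a, b} \<in> ET \<and> B a \<inter> B b \<inter> S \<noteq> {}}"

definition bag_intersection_graph ::
  "'a set set \<Rightarrow> 'b set \<Rightarrow> ('b \<Rightarrow> 'a set) \<Rightarrow> 'a set set set" where
  "bag_intersection_graph Hs T B =
     {{H, H'} | H H'. H \<in> Hs \<and> H' \<in> Hs \<and> H \<noteq> H' \<and> (\<exists>z\<in>T. H \<inter> B z \<noteq> {} \<and> H' \<inter> B z \<noteq> {})}"

text \<open>The empty member of \<H> meets no bag, so it is placed in the bag of the node z0.\<close>
definition meeting_bag :: "'a set set \<Rightarrow> ('b \<Rightarrow> 'a set) \<Rightarrow> 'b \<Rightarrow> 'b \<Rightarrow> 'a set set" where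
  "meeting_bag Hs B z0 z = {H\<in>Hs. H \<inter> B z \<noteq> {} \<or> (H = {} \<and> z = z0)}"

lemma induced_connected_image:
  assumes "induced_connected E S"
  shows "induced_connected ((`) g ` E) (g ` S)"
  unfolding induced_connected_def
proof (intro ballI)
  fix x y assume "x \<in> g ` S" "y \<in> g ` S"
  then obtain a b where ab: "a \<in> S" "b \<in> S" "x = g a" "y = g b" by auto
  have "(a, b) \<in> (induced_edges E S)\<^sup>*"
    using assms ab unfolding induced_connected_def by blast
  then have "(g a, g b) \<in> (induced_edges ((`) g ` E) (g ` S))\<^sup>*"
  proof (induction rule: rtrancl_induct)
    case (step c d)
    then have "(g c, g d) \<in> induced_edges ((`) g ` E) (g ` S)"
      by (auto intro!: image_eqI[where x="{c, d}"])
    with step.IH show ?case by (rule rtrancl_into_rtrancl)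
  qed simp
  then show "(x, y) \<in> (induced_edges ((`) g ` E) (g ` S))\<^sup>*" using ab by simp
qed

lemma induced_connected_image_iff:
  assumes "inj_on g A" "S \<subseteq> A" "\<forall>e\<in>E. e \<subseteq> A"
  shows "induced_connected ((`) g ` E) (g ` S) \<longleftrightarrow> induced_connected E S"
proof
  assume "induced_connected ((`) g ` E) (g ` S)"
  then have "induced_connected ((`) (inv_into A g) ` (`) g ` E) (inv_into A g ` g ` S)"
    by (rule induced_connected_image)
  moreover have "inv_into A g ` g ` S = S" using assms by simp
  moreover have "(`) (inv_into A g) ` (`) g ` E = E"
  proof -
    have "(`) (inv_into A g) ` (`) g ` E = (\<lambda>e. inv_into A g ` g ` e) ` E"
      by (simp add: image_image)
    also have "\<dots> = (\<lambda>e. e) ` E" using assms(1,3) by (intro image_cong) auto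
    finally show ?thesis by simp
  qed
  ultimately show "induced_connected E S" by simp
qed (rule induced_connected_image)

lemma is_tree_image:
  assumes tree: "is_tree T ET" and inj: "inj_on g T"
  shows "is_tree (g ` T) ((`) g ` ET)"
proof -
  have edges: "\<forall>e\<in>ET. e \<subseteq> T \<and> card e = 2" using tree unfolding is_tree_def graph_def by auto
  have "graph (g ` T) ((`) g ` ET)"
    unfolding graph_def using edges inj by (auto simp: card_image inj_on_subset)
  moreover have "\<not> induced_connected ((`) g ` ET - {g ` e}) (g ` T)" if e: "e \<in> ET" for e
  proof -
    have "inj_on ((`) g) (Pow T)" using inj by (rule inj_on_image_Pow)
    then have "(`) g ` ET - {g ` e} = (`) g ` (ET - {e})"
      using e edges by (auto simp: inj_on_def)
    then show ?thesis
      using induced_connected_image_iff[OF inj order_refl, of "ET - {e}"] edges e tree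
      unfolding is_tree_def by auto
  qed
  ultimately show ?thesis
    using tree induced_connected_image[of ET T g] unfolding is_tree_def by auto
qed

lemma tree_decomposition_image:
  assumes td: "tree_decomposition V E T ET B" and inj: "inj_on g T"
  shows "tree_decomposition V E (g ` T) ((`) g ` ET) (B \<circ> inv_into T g)"
proof -
  have tree: "is_tree T ET" using td unfolding tree_decomposition_def by auto
  have bag: "\<And>z. z \<in> T \<Longrightarrow> (B \<circ> inv_into T g) (g z) = B z" using inj by simp
  have "induced_connected ((`) g ` ET) {i \<in> g ` T. v \<in> (B \<circ> inv_into T g) i}" if "v \<in> V" for v
  proof -
    have "{i \<in> g ` T. v \<in> (B \<circ> inv_into T g) i} = g ` {z\<in>T. v \<in> B z}" using bag by force
    then show ?thesis
      using td that induced_connected_image unfolding tree_decomposition_def by metis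
  qed
  then show ?thesis using td is_tree_image[OF tree inj] bag
    unfolding tree_decomposition_def by (auto; metis)
qed

lemma treewidth_le_if_tree_decomposition:
  fixes T :: "'b set"
  assumes td: "tree_decomposition V E T ET B" and small: "\<forall>z\<in>T. card (B z) \<le> k + 1"
  shows "treewidth_le V E k"
proof -
  have "finite T" using td unfolding tree_decomposition_def is_tree_def by auto
  then obtain g :: "'b \<Rightarrow> nat" where g: "inj_on g T"
    using finite_imp_inj_to_nat_seg by blast
  have "tree_decomposition V E (g ` T) ((`) g ` ET) (B \<circ> inv_into T g)"
    using td g by (rule tree_decomposition_image)
  moreover have "\<forall>i\<in>g ` T. card ((B \<circ> inv_into T g) i) \<le> k + 1" using small g by auto
  ultimately show ?thesis unfolding treewidth_le_def by blast
qed

lemma tree_decomposition_vertex_path: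
  assumes td: "tree_decomposition V E T ET B" and "v \<in> V" "v \<in> S"
    and "z \<in> T" "v \<in> B z" "z' \<in> T" "v \<in> B z'"
  shows "(z, z') \<in> (adhesion_edges T ET B S)\<^sup>*"
proof -
  have "(z, z') \<in> (induced_edges ET {z\<in>T. v \<in> B z})\<^sup>*"
    using assms unfolding tree_decomposition_def induced_connected_def by blast
  then show ?thesis
    by (rule rev_subsetD[OF _ rtrancl_mono]) (use \<open>v \<in> S\<close> in \<open>auto simp: adhesion_edges_def\<close>)
qed

lemma tree_decomposition_adhesion_path:
  assumes td: "tree_decomposition V E T ET B" and SV: "S \<subseteq> V"
    and path: "(u, w) \<in> (induced_edges E S)\<^sup>*" and "u \<in> S"
    and "z \<in> T" "u \<in> B z" "z' \<in> T" "w \<in> B z'"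
  shows "(z, z') \<in> (adhesion_edges T ET B S)\<^sup>*"
  using path \<open>z' \<in> T\<close> \<open>w \<in> B z'\<close>
proof (induction arbitrary: z' rule: rtrancl_induct)
  case base
  then show ?case using assms SV tree_decomposition_vertex_path[OF td, of u S z z'] by auto
next
  case (step v w z')
  then obtain z'' where z'': "z'' \<in> T" "{v, w} \<subseteq> B z''"
    using td unfolding tree_decomposition_def by blast
  then have "(z, z'') \<in> (adhesion_edges T ET B S)\<^sup>*" using step.IH by auto
  moreover have "(z'', z') \<in> (adhesion_edges T ET B S)\<^sup>*"
    using step z'' SV by (intro tree_decomposition_vertex_path[OF td]) auto
  ultimately show ?case by (rule rtrancl_trans)
qed

lemma tree_decomposition_meeting_connected:
  assumes td: "tree_decomposition V E T ET B" and "H \<subseteq> V" "induced_connected E H"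
  shows "induced_connected ET {z\<in>T. H \<inter> B z \<noteq> {}}"
  unfolding induced_connected_def
proof (intro ballI)
  fix x y assume x: "x \<in> {z\<in>T. H \<inter> B z \<noteq> {}}" and y: "y \<in> {z\<in>T. H \<inter> B z \<noteq> {}}"
  then obtain u w where uw: "u \<in> H" "u \<in> B x" "w \<in> H" "w \<in> B y" by auto
  then have "(u, w) \<in> (induced_edges E H)\<^sup>*"
    using assms(3) unfolding induced_connected_def by blast
  then have "(x, y) \<in> (adhesion_edges T ET B H)\<^sup>*"
    using tree_decomposition_adhesion_path[OF td \<open>H \<subseteq> V\<close>] x y uw by blast
  then show "(x, y) \<in> (induced_edges ET {z\<in>T. H \<inter> B z \<noteq> {}})\<^sup>*"
    by (rule rev_subsetD[OF _ rtrancl_mono]) (auto simp: adhesion_edges_def)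
qed

lemma graph_bag_intersection_graph: "graph Hs (bag_intersection_graph Hs T B)"
  unfolding graph_def bag_intersection_graph_def by (auto simp: card_insert_if)

lemma bag_intersection_graph_connects_along_adhesions:
  assumes easy: "K_easy Hs Ks ET B" and "K \<in> Ks"
    and path: "(a, b) \<in> (adhesion_edges T ET B K)\<^sup>*" and "a \<in> T"
    and "H \<in> Hs" "H \<inter> K \<inter> B a \<noteq> {}" "H' \<in> Hs" "H' \<inter> K \<inter> B b \<noteq> {}"
  shows "(H, H') \<in> (induced_edges (bag_intersection_graph Hs T B) (meeting Hs K))\<^sup>*"
proof -
  let ?R = "induced_edges (bag_intersection_graph Hs T B) (meeting Hs K)"
  have in_bag: "(H1, H2) \<in> ?R\<^sup>*"
    if "c \<in> T" "H1 \<in> Hs" "H2 \<in> Hs" "H1 \<inter> K \<inter> B c \<noteq> {}" "H2 \<inter> K \<inter> B c \<noteq> {}" for H1 H2 c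
  proof (cases "H1 = H2")
    case False
    then have "(H1, H2) \<in> ?R"
      using that unfolding bag_intersection_graph_def meeting_def by blast
    then show ?thesis by (rule r_into_rtrancl)
  qed simp
  show ?thesis
    using path \<open>H' \<in> Hs\<close> \<open>H' \<inter> K \<inter> B b \<noteq> {}\<close>
  proof (induction arbitrary: H' rule: rtrancl_induct)
    case base
    then show ?case using in_bag[of a H H'] assms by simp
  next
    case (step b c H')
    then have "b \<in> T" "c \<in> T" "{b, c} \<in> ET" "B b \<inter> B c \<inter> K \<noteq> {}"
      by (auto simp: adhesion_edges_def)
    then obtain H'' where H'': "H'' \<in> Hs" "H'' \<inter> K \<inter> (B b \<inter> B c) \<noteq> {}"
      using easy \<open>K \<in> Ks\<close> unfolding K_easy_def meeting_def by blast
    have "(H, H'') \<in> ?R\<^sup>*"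
      using step.IH H'' by fast
    moreover have "(H'', H') \<in> ?R\<^sup>*"
      using in_bag[of c H'' H'] \<open>c \<in> T\<close> H'' step.prems by fast
    ultimately show ?case by (rule rtrancl_trans)
  qed
qed

lemma intersection_support_bag_intersection_graph:
  assumes td: "tree_decomposition V E T ET B" and easy: "K_easy Hs Ks ET B"
    and Ks: "\<forall>K\<in>Ks. K \<subseteq> V \<and> induced_connected E K"
  shows "intersection_support Hs Ks (bag_intersection_graph Hs T B)"
  unfolding intersection_support_def induced_connected_def
proof (intro conjI graph_bag_intersection_graph ballI)
  fix K H1 H2 assume K: "K \<in> Ks" and H1: "H1 \<in> meeting Hs K" and H2: "H2 \<in> meeting Hs K"
  have KV: "K \<subseteq> V" using K Ks by auto
  obtain v1 v2 where v: "v1 \<in> H1 \<inter> K" "v2 \<in> H2 \<inter> K" using H1 H2 unfolding meeting_def by auto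
  then obtain z1 z2 where z: "z1 \<in> T" "v1 \<in> B z1" "z2 \<in> T" "v2 \<in> B z2"
    using td KV unfolding tree_decomposition_def by (meson IntD2 subsetD)
  have "(v1, v2) \<in> (induced_edges E K)\<^sup>*"
    using K Ks v unfolding induced_connected_def by blast
  moreover have "v1 \<in> K" using v by blast
  ultimately have "(z1, z2) \<in> (adhesion_edges T ET B K)\<^sup>*"
    by (rule tree_decomposition_adhesion_path[OF td KV _ _ z])
  then show "(H1, H2) \<in> (induced_edges (bag_intersection_graph Hs T B) (meeting Hs K))\<^sup>*"
    by (rule bag_intersection_graph_connects_along_adhesions[OF easy K _ z(1)])
      (use H1 H2 v z in \<open>auto simp: meeting_def\<close>)
qed

lemma tree_decomposition_bag_intersection_graph:
  assumes td: "tree_decomposition V E T ET B" and "z0 \<in> T"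
    and Hs: "\<forall>H\<in>Hs. H \<subseteq> V \<and> induced_connected E H"
  shows "tree_decomposition Hs (bag_intersection_graph Hs T B) T ET (meeting_bag Hs B z0)"
  unfolding tree_decomposition_def
proof (intro conjI ballI)
  show "is_tree T ET" using td unfolding tree_decomposition_def by auto
  show "meeting_bag Hs B z0 z \<subseteq> Hs" for z unfolding meeting_bag_def by auto
  show "\<exists>z\<in>T. e \<subseteq> meeting_bag Hs B z0 z" if "e \<in> bag_intersection_graph Hs T B" for e
    using that unfolding bag_intersection_graph_def meeting_bag_def by blast
  fix H assume H: "H \<in> Hs"
  show "\<exists>z\<in>T. H \<in> meeting_bag Hs B z0 z"
  proof (cases "H = {}")
    case False
    then obtain u where u: "u \<in> H" by auto
    then have "u \<in> V" using H Hs by auto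
    then obtain z where "z \<in> T" "u \<in> B z" using td unfolding tree_decomposition_def by blast
    then show ?thesis using H u unfolding meeting_bag_def by blast
  qed (use \<open>z0 \<in> T\<close> H in \<open>auto simp: meeting_bag_def\<close>)
  show "induced_connected ET {z\<in>T. H \<in> meeting_bag Hs B z0 z}"
  proof (cases "H = {}")
    case True
    then have "{z\<in>T. H \<in> meeting_bag Hs B z0 z} = {z0}"
      using \<open>z0 \<in> T\<close> H unfolding meeting_bag_def by auto
    then show ?thesis unfolding induced_connected_def by auto
  next
    case False
    then have "{z\<in>T. H \<in> meeting_bag Hs B z0 z} = {z\<in>T. H \<inter> B z \<noteq> {}}"
      using H unfolding meeting_bag_def by auto
    then show ?thesis using tree_decomposition_meeting_connected[OF td] H Hs by simp
  qed
qed

lemma card_meeting_bag_le: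
  assumes "finite Hs" "sparse k Hs T B" "z \<in> T"
  shows "card (meeting_bag Hs B z0 z) \<le> k + 1"
proof -
  have "card (meeting_bag Hs B z0 z) \<le> card (insert {} {H\<in>Hs. H \<inter> B z \<noteq> {}})"
    using assms(1) by (intro card_mono) (auto simp: meeting_bag_def)
  also have "\<dots> \<le> card {H\<in>Hs. H \<inter> B z \<noteq> {}} + 1" by (simp add: card_insert_le_m1 card_insert_if)
  also have "\<dots> \<le> k + 1" using assms(2,3) unfolding sparse_def by auto
  finally show ?thesis .
qed

theorem mainTheorem11:
  fixes V :: "'a set" and E :: "'a set set" and Hs Ks :: "'a set set"
    and T :: "'b set" and ET :: "'b set set" and B :: "'b \<Rightarrow> 'a set" and k :: nat
  assumes "graph V E" and "finite V"
    and "\<forall>H\<in>Hs. H \<subseteq> V \<and> induced_connected E H"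
    and "\<forall>K\<in>Ks. K \<subseteq> V \<and> induced_connected E K"
    and "tree_decomposition V E T ET B"
    and "K_easy Hs Ks ET B"
    and "sparse k Hs T B"
  shows "\<exists>Q. intersection_support Hs Ks Q \<and> treewidth_le Hs Q k"
proof -
  obtain z0 where z0: "z0 \<in> T"
    using assms(5) unfolding tree_decomposition_def is_tree_def by auto
  have "finite Hs" using assms(2,3) by (meson Pow_iff finite_Pow_iff finite_subset subsetI)
  then have "treewidth_le Hs (bag_intersection_graph Hs T B) k"
    using card_meeting_bag_le[OF _ assms(7)]
    by (intro treewidth_le_if_tree_decomposition
        [OF tree_decomposition_bag_intersection_graph[OF assms(5) z0 assms(3)]]) blast
  moreover have "intersection_support Hs Ks (bag_intersection_graph Hs T B)"
    using assms(5,6,4) by (rule intersection_support_bag_intersection_graph)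
  ultimately show ?thesis by blast
qed

end
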